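(* Let $M,N\in\mathbb{R}^{(k+n)\times(k+n)}$ be symmetric. Let $\mathcal{S}_N:=\{Z\in\mathbb{R}^{n\times k}\mid \begin{bmatrix} I\\ Z\end{bmatrix}^\top N\begin{bmatrix} I\\ Z\end{bmatrix}\ge 0\}$. Assume $\mathcal{S}_N$ is bounded and that there exists $\bar Z\in\mathbb{R}^{n\times k}$ with $\begin{bmatrix} I\\ \bar Z\end{bmatrix}^\top N\begin{bmatrix} I\\ \bar Z\end{bmatrix}>0$. Then $$\begin{bmatrix} I\\ Z\end{bmatrix}^\top M\begin{bmatrix} I\\ Z\end{bmatrix}>0 \quad\text{for all } Z\in\mathcal{S}_N$$ if and only if there exists $\alpha\ge0$ such that $M-\alpha N>0$.
   Context: $I$ denotes the $k\times k$ identity. For symmetric matrices, $\ge 0$ means positive semidefinite and $>0$ positive definite. *)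

theory Defs
  imports "HOL-Analysis.Analysis"
begin

definition stackIZ :: "real^'k^'n \<Rightarrow> real^'k^('k + 'n)" where
  "stackIZ Z = (\<chi> i. case i of Inl a \<Rightarrow> (mat 1 :: real^'k^'k) $ a | Inr b \<Rightarrow> Z $ b)"

definition psd :: "real^'m^'m \<Rightarrow> bool" where
  "psd A \<longleftrightarrow> transpose A = A \<and> (\<forall>x. 0 \<le> x \<bullet> (A *v x))"

definition pd :: "real^'m^'m \<Rightarrow> bool" where
  "pd A \<longleftrightarrow> transpose A = A \<and> (\<forall>x. x \<noteq> 0 \<longrightarrow> 0 < x \<bullet> (A *v x))"

definition quadIZ :: "real^('k + 'n)^('k + 'n) \<Rightarrow> real^'k^'n \<Rightarrow> real^'k^'k" where
  "quadIZ N Z = transpose (stackIZ Z) ** N ** stackIZ Z"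

definition SN :: "real^('k + 'n)^('k + 'n) \<Rightarrow> (real^'k^'n) set" where
  "SN N = {Z. psd (quadIZ N Z)}"

end

theory Submission
  imports Defs
begin

text \<open>The implication from right to left is immediate: on \<open>SN N\<close> the stacked form of \<open>N\<close> is
  positive semidefinite and that of \<open>M - \<alpha> N\<close> is positive definite.

  For the converse, boundedness of \<open>SN N\<close> forces the lower right block \<open>N\<^sub>2\<^sub>2\<close> of \<open>N\<close> to be
  negative definite, since otherwise a rank-one ray starting in \<open>SN N\<close> would stay in \<open>SN N\<close>.
  Then \<open>C = - N\<^sub>2\<^sub>2\<^sup>-\<^sup>1 N\<^sub>2\<^sub>1\<close> lies in \<open>SN N\<close>, its stacked form being the Schur complement of
  \<open>N\<^sub>2\<^sub>2\<close>, and a rank-one correction of \<open>C\<close>, controlled by the Cauchy--Schwarz inequality for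
  that Schur complement, puts every \<open>x = [u; w]\<close> with \<open>x\<^sup>T N x \<ge> 0\<close> into the range of \<open>[I; Z]\<close>
  for some \<open>Z \<in> SN N\<close>, with \<open>u \<noteq> 0\<close> unless \<open>x = 0\<close>. So \<open>x\<^sup>T M x > 0\<close> whenever \<open>x \<noteq> 0\<close>
  and \<open>x\<^sup>T N x \<ge> 0\<close>, and the strict S-lemma, applicable because \<open>[I; Z\<^sub>b] e\<close> is strictly
  \<open>N\<close>-positive, yields \<open>\<alpha>\<close>.\<close>

definition quad_form :: "real^'m^'m \<Rightarrow> real^'m \<Rightarrow> real" where
  "quad_form A x = x \<bullet> (A *v x)"

definition block_vec :: "'a^'k \<Rightarrow> 'a^'n \<Rightarrow> 'a^('k::finite + 'n::finite)" where
  "block_vec u v = (\<chi> i. case i of Inl a \<Rightarrow> u $ a | Inr b \<Rightarrow> v $ b)"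

definition lower_block :: "'a^('k::finite + 'n::finite) \<Rightarrow> 'a^'n" where
  "lower_block x = (\<chi> b. x $ Inr b)"

definition outer_prod :: "real^'n \<Rightarrow> real^'k \<Rightarrow> real^'k^'n" where
  "outer_prod d w = (\<chi> b a. d $ b * w $ a)"

lemma symmetric_inner_mult_vec:
  fixes A :: "real^'m^'m"
  assumes "transpose A = A"
  shows "x \<bullet> (A *v y) = y \<bullet> (A *v x)"
proof -
  have "x \<bullet> (A *v y) = (transpose A *v x) \<bullet> y"
    by (simp add: dot_lmul_matrix)
  with assms show ?thesis by (simp add: inner_commute)
qed

lemma quad_form_add:
  fixes A :: "real^'m^'m"
  assumes "transpose A = A"
  shows "quad_form A (x + y) = quad_form A x + 2 * (x \<bullet> (A *v y)) + quad_form A y"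
  using assms unfolding quad_form_def
  by (simp add: matrix_vector_right_distrib inner_add_left inner_add_right symmetric_inner_mult_vec[of A y x])

lemma quad_form_scaleR [simp]: "quad_form A (c *\<^sub>R x) = c\<^sup>2 * quad_form A x"
  by (simp add: quad_form_def matrix_vector_mult_scaleR power2_eq_square)

lemma quad_form_zero [simp]: "quad_form A 0 = 0"
  by (simp add: quad_form_def)

lemma quad_form_diff_scaleR: "quad_form (M - c *\<^sub>R N) x = quad_form M x - c * quad_form N x"
  by (simp add: quad_form_def matrix_vector_mult_diff_rdistrib
      scaleR_matrix_vector_assoc[symmetric] inner_diff_right)

lemma quad_form_mat_1 [simp]: "quad_form (mat 1) x = x \<bullet> x"
  by (simp add: quad_form_def)

lemma continuous_on_quad_form: "continuous_on S (quad_form A)"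
proof -
  have "continuous_on S (\<lambda>x. A *v x)"
    by (intro linear_continuous_on) (simp add: linear_conv_bounded_linear)
  then show ?thesis unfolding quad_form_def by (intro continuous_intros)
qed

lemma transpose_diff_scaleR: "transpose (M - c *\<^sub>R N) = transpose M - c *\<^sub>R transpose N"
  by (simp add: vec_eq_iff transpose_def)

lemma psd_iff_quad_form: "psd A \<longleftrightarrow> transpose A = A \<and> (\<forall>x. 0 \<le> quad_form A x)"
  by (simp add: psd_def quad_form_def)

lemma pd_iff_quad_form: "pd A \<longleftrightarrow> transpose A = A \<and> (\<forall>x. x \<noteq> 0 \<longrightarrow> 0 < quad_form A x)"
  by (simp add: pd_def quad_form_def)

lemma pd_imp_psd: "pd A \<Longrightarrow> psd A"
  unfolding pd_iff_quad_form psd_iff_quad_form by (metis order.strict_implies_order order.refl quad_form_zero)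

lemma psd_cauchy_schwarz:
  assumes "psd A" and "0 < quad_form A x"
  shows "(x \<bullet> (A *v y))\<^sup>2 \<le> quad_form A x * quad_form A y"
proof -
  let ?a = "quad_form A x" and ?b = "x \<bullet> (A *v y)"
  define t where "t = - ?b / ?a"
  have sym: "transpose A = A" using assms(1) by (simp add: psd_iff_quad_form)
  have "0 \<le> quad_form A (t *\<^sub>R x + y)"
    using assms(1) by (simp add: psd_iff_quad_form)
  also have "\<dots> = t\<^sup>2 * ?a + 2 * t * ?b + quad_form A y"
    using sym by (simp add: quad_form_add matrix_vector_mult_scaleR)
  also have "\<dots> = quad_form A y + t * (t * ?a + ?b) + t * ?b"
    by (simp add: power2_eq_square algebra_simps)
  also have "\<dots> = quad_form A y - ?b\<^sup>2 / ?a"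
    using assms(2) by (simp add: t_def power2_eq_square)
  finally have "?b\<^sup>2 / ?a \<le> quad_form A y" by simp
  then show ?thesis using assms(2) by (simp add: pos_divide_le_eq mult.commute)
qed

lemma block_vec_add: "block_vec u v + block_vec u' v' = block_vec (u + u') (v + v')"
  by (simp add: vec_eq_iff block_vec_def split: sum.split)

lemma block_vec_scaleR: "c *\<^sub>R block_vec u v = block_vec (c *\<^sub>R u) (c *\<^sub>R v)"
  by (simp add: vec_eq_iff block_vec_def split: sum.split)

lemma block_vec_eq_0_iff [simp]: "block_vec u v = 0 \<longleftrightarrow> u = 0 \<and> v = 0"
  by (auto simp: vec_eq_iff block_vec_def split: sum.split)

lemma block_vec_0 [simp]: "block_vec 0 0 = 0"
  by simp

lemma block_vec_zero_scaleR: "block_vec 0 (c *\<^sub>R v) = c *\<^sub>R block_vec 0 v"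
  by (simp add: block_vec_scaleR)

lemma block_vec_cases:
  obtains u v where "x = block_vec u v"
proof
  show "x = block_vec (\<chi> a. x $ Inl a) (\<chi> b. x $ Inr b)"
    by (simp add: vec_eq_iff block_vec_def split: sum.split)
qed

lemma lower_block_vec [simp]: "lower_block (block_vec u v) = v"
  by (simp add: lower_block_def block_vec_def)

lemma inner_block_vec: "block_vec u v \<bullet> block_vec u' v' = u \<bullet> u' + v \<bullet> v'"
  by (simp add: inner_vec_def block_vec_def sum.Plus[of UNIV UNIV, simplified] comp_def)

lemma inner_block_vec_zero_left: "block_vec 0 v \<bullet> x = v \<bullet> lower_block x"
  by (cases x rule: block_vec_cases) (simp add: inner_block_vec)

lemma linear_block_vec_left: "linear (\<lambda>u. block_vec u 0)"
  by (rule linearI) (simp_all add: block_vec_add block_vec_scaleR)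

lemma linear_block_vec_right: "linear (\<lambda>v. block_vec 0 v)"
  by (rule linearI) (simp_all add: block_vec_add block_vec_scaleR)

lemma linear_lower_block: "linear lower_block"
  by (rule linearI) (simp_all add: vec_eq_iff lower_block_def)

lemma stackIZ_mult_vec: "stackIZ Z *v u = block_vec u (Z *v u)"
proof -
  have "(stackIZ Z *v u) $ i = (case i of Inl a \<Rightarrow> (mat 1 *v u) $ a | Inr b \<Rightarrow> (Z *v u) $ b)" for i
    by (simp add: stackIZ_def matrix_vector_mult_def split: sum.split)
  then show ?thesis by (simp add: vec_eq_iff block_vec_def split: sum.split)
qed

lemma stackIZ_add_mult_vec: "stackIZ (Z + D) *v u = stackIZ Z *v u + block_vec 0 (D *v u)"
  by (simp add: stackIZ_mult_vec block_vec_add matrix_vector_mult_add_rdistrib)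

lemma quad_form_quadIZ: "quad_form (quadIZ N Z) u = quad_form N (stackIZ Z *v u)"
proof -
  have "quad_form (quadIZ N Z) u = u \<bullet> (transpose (stackIZ Z) *v (N *v (stackIZ Z *v u)))"
    by (simp only: quad_form_def quadIZ_def matrix_vector_mul_assoc matrix_mul_assoc)
  also have "\<dots> = quad_form N (stackIZ Z *v u)"
    by (simp only: quad_form_def dot_lmul_matrix[symmetric] vector_transpose_matrix)
  finally show ?thesis .
qed

lemma transpose_quadIZ: "transpose N = N \<Longrightarrow> transpose (quadIZ N Z) = quadIZ N Z"
  by (simp add: quadIZ_def matrix_transpose_mul matrix_mul_assoc)

lemma mem_SN_iff:
  "transpose N = N \<Longrightarrow> Z \<in> SN N \<longleftrightarrow> (\<forall>u. 0 \<le> quad_form N (stackIZ Z *v u))"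
  by (simp add: SN_def psd_iff_quad_form transpose_quadIZ quad_form_quadIZ)

lemma outer_prod_mult_vec: "outer_prod d w *v u = (w \<bullet> u) *\<^sub>R d"
  by (simp add: vec_eq_iff outer_prod_def matrix_vector_mult_def inner_vec_def
      sum_distrib_left mult_ac)

lemma outer_prod_eq_0_iff: "outer_prod d w = 0 \<longleftrightarrow> d = 0 \<or> w = 0"
  by (auto simp: outer_prod_def vec_eq_iff)

subsection \<open>The S-lemma\<close>

lemma quadratic_opposite_sign_roots:
  fixes a b c :: real
  assumes a: "0 < a" and c: "c < 0"
  obtains p r where "a * p\<^sup>2 + 2 * b * p + c = 0" and "a * r\<^sup>2 + 2 * b * r + c = 0"
    and "r < 0" and "0 < p" and "p * r = c / a"
proof
  define s where "s = sqrt (b\<^sup>2 - a * c)"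
  have "a * c < 0" using a c by (simp add: mult_pos_neg)
  then have "0 < b\<^sup>2 - a * c" using zero_le_power2[of b] by linarith
  then have s2: "s\<^sup>2 = b\<^sup>2 - a * c" and s: "0 < s" by (simp_all add: s_def)
  define p where "p = (s - b) / a"
  define r where "r = (- s - b) / a"
  have ap: "a * p = s - b" and ar: "a * r = - s - b" using a by (simp_all add: p_def r_def)
  have root: "a * x\<^sup>2 + 2 * b * x + c = 0" if "(a * x + b)\<^sup>2 = s\<^sup>2" for x
  proof -
    have "a * (a * x\<^sup>2 + 2 * b * x + c) = (a * x + b)\<^sup>2 - s\<^sup>2"
      unfolding s2 by (simp add: power2_eq_square algebra_simps)
    with that a show ?thesis by simp
  qed
  show "a * p\<^sup>2 + 2 * b * p + c = 0" by (rule root) (simp add: ap)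
  show "a * r\<^sup>2 + 2 * b * r + c = 0" by (rule root) (simp add: ar power2_eq_square)
  have "(a * p) * (a * r) = b\<^sup>2 - s\<^sup>2" unfolding ap ar by (simp add: power2_eq_square algebra_simps)
  then have "(a * p) * (a * r) = a * c" using s2 by simp
  then show pr: "p * r = c / a" using a by (simp add: field_simps)
  have "a * (p - r) = 2 * s" using ap ar by (simp add: algebra_simps)
  then have "r < p" using a s by (smt (verit) mult_nonneg_nonpos)
  moreover have "p * r < 0" using pr a c by (simp add: divide_neg_pos)
  ultimately show "r < 0" and "0 < p" by (auto simp: mult_less_0_iff)
qed

lemma ratio_le_of_nonneg_at_roots:
  fixes n1 n12 n2 m1 m12 m2 :: real
  assumes n1: "0 < n1" and n2: "n2 < 0"
    and nonneg: "\<And>a. n1 * a\<^sup>2 + 2 * n12 * a + n2 = 0 \<Longrightarrow> 0 \<le> m1 * a\<^sup>2 + 2 * m12 * a + m2"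
  shows "n2 * m1 \<le> m2 * n1"
proof -
  obtain p r where "n1 * p\<^sup>2 + 2 * n12 * p + n2 = 0" "n1 * r\<^sup>2 + 2 * n12 * r + n2 = 0"
    and r: "r < 0" and p: "0 < p" and pr: "p * r = n2 / n1"
    using quadratic_opposite_sign_roots[OF n1 n2] by blast
  then have mp: "0 \<le> m1 * p\<^sup>2 + 2 * m12 * p + m2" and mr: "0 \<le> m1 * r\<^sup>2 + 2 * m12 * r + m2"
    by (simp_all add: nonneg)
  have "0 \<le> (- r) * (m1 * p\<^sup>2 + 2 * m12 * p + m2)" and "0 \<le> p * (m1 * r\<^sup>2 + 2 * m12 * r + m2)"
    using mp mr p r by (simp_all add: mult_nonpos_nonneg)
  then have "0 \<le> (- r) * (m1 * p\<^sup>2 + 2 * m12 * p + m2) + p * (m1 * r\<^sup>2 + 2 * m12 * r + m2)"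
    by linarith
  also have "\<dots> = (p - r) * (m2 - m1 * (p * r))"
    by (simp add: algebra_simps power2_eq_square)
  finally have "m1 * (n2 / n1) \<le> m2" using p r pr by (simp add: zero_le_mult_iff)
  then show ?thesis using n1 by (simp add: field_simps)
qed

lemma s_lemma_ratio_le:
  fixes M N :: "real^'m^'m"
  assumes sM: "transpose M = M" and sN: "transpose N = N"
    and cone: "\<And>z. 0 \<le> quad_form N z \<Longrightarrow> 0 \<le> quad_form M z"
    and x: "0 < quad_form N x" and y: "quad_form N y < 0"
  shows "quad_form N y * quad_form M x \<le> quad_form M y * quad_form N x"
proof -
  have line: "quad_form A (a *\<^sub>R x + y) = quad_form A x * a\<^sup>2 + 2 * (x \<bullet> (A *v y)) * a + quad_form A y"
    if "transpose A = A" for A :: "real^'m^'m" and a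
    using that by (simp add: quad_form_add matrix_vector_mult_scaleR symmetric_inner_mult_vec[OF that, of y x]
        algebra_simps)
  show ?thesis
  proof (rule ratio_le_of_nonneg_at_roots[OF x y])
    fix a
    assume "quad_form N x * a\<^sup>2 + 2 * (x \<bullet> (N *v y)) * a + quad_form N y = 0"
    then have "0 \<le> quad_form M (a *\<^sub>R x + y)" by (intro cone) (simp add: line[OF sN])
    then show "0 \<le> quad_form M x * a\<^sup>2 + 2 * (x \<bullet> (M *v y)) * a + quad_form M y"
      by (simp add: line[OF sM])
  qed
qed

text \<open>The multiplier is the largest ratio \<open>quad_form M y / quad_form N y\<close> over \<open>N\<close>-negative
  directions \<open>y\<close>; it is bounded by every such ratio over \<open>N\<close>-positive directions.\<close>
lemma s_lemma:
  fixes M N :: "real^'m^'m"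
  assumes sM: "transpose M = M" and sN: "transpose N = N"
    and x0: "0 < quad_form N x0"
    and cone: "\<And>z. 0 \<le> quad_form N z \<Longrightarrow> 0 \<le> quad_form M z"
  obtains \<alpha> where "0 \<le> \<alpha>" and "\<And>x. \<alpha> * quad_form N x \<le> quad_form M x"
proof
  define R where "R = {quad_form M y / quad_form N y | y. quad_form N y < 0}"
  define \<alpha> where "\<alpha> = (if R = {} then 0 else max 0 (Sup R))"
  have R_le: "t \<le> quad_form M x / quad_form N x" if x: "0 < quad_form N x" and "t \<in> R" for x t
  proof -
    obtain y where t: "t = quad_form M y / quad_form N y" and y: "quad_form N y < 0"
      using \<open>t \<in> R\<close> by (auto simp: R_def)
    show ?thesis
      using s_lemma_ratio_le[OF sM sN cone x y] x y by (simp add: t field_simps)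
  qed
  have bdd: "bdd_above R" using R_le[OF x0] by (rule bdd_aboveI)
  show "0 \<le> \<alpha>" by (simp add: \<alpha>_def)
  fix x
  show "\<alpha> * quad_form N x \<le> quad_form M x"
  proof (cases "quad_form N x" "0::real" rule: linorder_cases)
    case less
    then have ratio: "quad_form M x / quad_form N x \<in> R" by (auto simp: R_def)
    then have "quad_form M x / quad_form N x \<le> \<alpha>"
      using cSup_upper[OF ratio bdd] by (auto simp: \<alpha>_def)
    then show ?thesis using less by (simp add: field_simps)
  next
    case equal
    then show ?thesis using cone[of x] by simp
  next
    case greater
    have "0 \<le> quad_form M x / quad_form N x" using cone[of x] greater by simp
    moreover have "Sup R \<le> quad_form M x / quad_form N x" if "R \<noteq> {}"
      using that by (intro cSup_least) (auto intro: R_le[OF greater])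
    ultimately have "\<alpha> \<le> quad_form M x / quad_form N x" by (simp add: \<alpha>_def)
    then show ?thesis using greater by (simp add: field_simps)
  qed
qed

text \<open>Strictness is reduced to the non-strict S-lemma by subtracting a multiple of the identity,
  namely the minimum of \<open>quad_form M\<close> on the compact set of \<open>N\<close>-nonnegative unit vectors.\<close>
lemma s_lemma_strict:
  fixes M N :: "real^'m^'m"
  assumes sM: "transpose M = M" and sN: "transpose N = N"
    and x0: "0 < quad_form N x0"
    and cone: "\<And>x. x \<noteq> 0 \<Longrightarrow> 0 \<le> quad_form N x \<Longrightarrow> 0 < quad_form M x"
  obtains \<alpha> where "0 \<le> \<alpha>" and "pd (M - \<alpha> *\<^sub>R N)"
proof -
  define K where "K = sphere (0::real^'m) 1 \<inter> {x. 0 \<le> quad_form N x}"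
  have "closed {x. 0 \<le> quad_form N x}"
    using closed_Collect_le[of "\<lambda>_. 0" "quad_form N"] continuous_on_quad_form by auto
  then have "compact K" by (simp add: K_def compact_Int_closed)
  have "x0 \<noteq> 0" using x0 by auto
  then have "(1 / norm x0) *\<^sub>R x0 \<in> K" using x0 by (simp add: K_def)
  then obtain x1 where x1: "x1 \<in> K" and min: "\<And>y. y \<in> K \<Longrightarrow> quad_form M x1 \<le> quad_form M y"
    using continuous_attains_inf[OF \<open>compact K\<close> _ continuous_on_quad_form] by blast
  define \<delta> where "\<delta> = quad_form M x1"
  have "x1 \<noteq> 0" using x1 by (auto simp: K_def)
  then have \<delta>: "0 < \<delta>" using x1 cone[of x1] by (simp add: K_def \<delta>_def)
  have shifted: "\<delta> * (x \<bullet> x) \<le> quad_form M x" if "0 \<le> quad_form N x" for x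
  proof (cases "x = 0")
    case False
    define u where "u = (1 / norm x) *\<^sub>R x"
    have "u \<in> K" using that False by (simp add: K_def u_def)
    then have "(norm x)\<^sup>2 * \<delta> \<le> (norm x)\<^sup>2 * quad_form M u"
      unfolding \<delta>_def by (intro mult_left_mono min) simp_all
    also have "\<dots> = quad_form M x" using False by (simp add: u_def power2_eq_square)
    finally show ?thesis by (simp add: power2_norm_eq_inner mult.commute)
  qed simp
  obtain \<alpha> where "0 \<le> \<alpha>" and \<alpha>: "\<And>x. \<alpha> * quad_form N x \<le> quad_form (M - \<delta> *\<^sub>R mat 1) x"
    using s_lemma[OF _ sN x0, of "M - \<delta> *\<^sub>R mat 1"] shifted
    by (auto simp: transpose_diff_scaleR sM quad_form_diff_scaleR)
  have "pd (M - \<alpha> *\<^sub>R N)"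
    unfolding pd_iff_quad_form
  proof (intro conjI allI impI)
    show "transpose (M - \<alpha> *\<^sub>R N) = M - \<alpha> *\<^sub>R N" by (simp add: transpose_diff_scaleR sM sN)
    fix x :: "real^'m"
    assume "x \<noteq> 0"
    then have "0 < \<delta> * (x \<bullet> x)" using \<delta> by simp
    then show "0 < quad_form (M - \<alpha> *\<^sub>R N) x" using \<alpha>[of x] by (simp add: quad_form_diff_scaleR)
  qed
  with \<open>0 \<le> \<alpha>\<close> show ?thesis by (rule that)
qed

subsection \<open>Consequences of the boundedness of \<open>SN N\<close>\<close>

lemma bounded_ray_imp_direction_eq_0:
  fixes Z D :: "'a::real_normed_vector"
  assumes "bounded S" and ray: "\<And>t. 0 \<le> t \<Longrightarrow> Z + t *\<^sub>R D \<in> S"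
  shows "D = 0"
proof (rule ccontr)
  assume "D \<noteq> 0"
  obtain B where B: "\<And>x. x \<in> S \<Longrightarrow> norm x \<le> B" using assms(1) by (auto simp: bounded_iff)
  have "norm Z \<le> B" using B[OF ray[of 0]] by simp
  define t where "t = (B + norm Z + 1) / norm D"
  have pos: "0 \<le> B + norm Z + 1" using \<open>norm Z \<le> B\<close> norm_ge_zero[of Z] by linarith
  then have "0 \<le> t" by (simp add: t_def)
  have "B + norm Z + 1 = norm (t *\<^sub>R D)"
    using \<open>D \<noteq> 0\<close> pos by (simp add: t_def)
  also have "\<dots> \<le> norm (Z + t *\<^sub>R D) + norm Z"
    using norm_triangle_ineq4[of "Z + t *\<^sub>R D" Z] by simp
  also have "\<dots> \<le> B + norm Z" using B[OF ray[OF \<open>0 \<le> t\<close>]] by simp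
  finally show False by simp
qed

text \<open>Otherwise the ray \<open>Zb + t d w\<^sup>T\<close>, \<open>t \<ge> 0\<close>, stays in \<open>SN N\<close>: \<open>w\<close> is chosen to make the cross
  term of the stacked form nonnegative.\<close>
lemma lower_block_quad_form_neg:
  fixes N :: "real^('k::finite + 'n::finite)^('k + 'n)" and Zb :: "real^'k^'n" and d :: "real^'n"
  assumes sN: "transpose N = N" and bounded: "bounded (SN N :: (real^'k^'n) set)"
    and Zb: "Zb \<in> SN N" and "d \<noteq> 0"
  shows "quad_form N (block_vec (0::real^'k) d) < 0"
proof (rule ccontr)
  define e :: "real^('k + 'n)" where "e = block_vec 0 d"
  assume "\<not> quad_form N (block_vec (0::real^'k) d) < 0"
  then have e_nonneg: "0 \<le> quad_form N e" by (simp add: e_def)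
  define v where "v = transpose (stackIZ Zb) *v (N *v e)"
  have cross: "(stackIZ Zb *v u) \<bullet> (N *v e) = u \<bullet> v" for u
    by (simp only: v_def dot_lmul_matrix[symmetric] vector_transpose_matrix)
  obtain w :: "real^'k" where "w \<noteq> 0" and w: "\<And>u. 0 \<le> (w \<bullet> u) * (u \<bullet> v)"
  proof (cases "v = 0")
    case True
    show ?thesis by (rule that[of "axis undefined 1"]) (simp_all add: True)
  next
    case False
    show ?thesis by (rule that[of v]) (simp_all add: False inner_commute)
  qed
  have "Zb + t *\<^sub>R outer_prod d w \<in> SN N" if "0 \<le> t" for t
    unfolding mem_SN_iff[OF sN]
  proof
    fix u
    define s where "s = t * (w \<bullet> u)"
    have "stackIZ (Zb + t *\<^sub>R outer_prod d w) *v u = stackIZ Zb *v u + s *\<^sub>R e"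
      by (simp add: stackIZ_add_mult_vec scaleR_matrix_vector_assoc[symmetric] outer_prod_mult_vec
          block_vec_scaleR s_def e_def)
    then have "quad_form N (stackIZ (Zb + t *\<^sub>R outer_prod d w) *v u)
        = quad_form N (stackIZ Zb *v u) + 2 * (s * (u \<bullet> v)) + s\<^sup>2 * quad_form N e"
      by (simp add: quad_form_add[OF sN] matrix_vector_mult_scaleR cross)
    moreover have "0 \<le> quad_form N (stackIZ Zb *v u)" using Zb by (simp add: mem_SN_iff[OF sN])
    moreover have "0 \<le> s * (u \<bullet> v)" using w[of u] \<open>0 \<le> t\<close> by (simp add: s_def mult.assoc)
    ultimately show "0 \<le> quad_form N (stackIZ (Zb + t *\<^sub>R outer_prod d w) *v u)"
      using e_nonneg by simp
  qed
  then have "outer_prod d w = 0" by (intro bounded_ray_imp_direction_eq_0[OF bounded])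
  with \<open>d \<noteq> 0\<close> \<open>w \<noteq> 0\<close> show False by (simp add: outer_prod_eq_0_iff)
qed

subsection \<open>The Schur complement of the lower right block\<close>

text \<open>\<open>schur_stack N C\<close> says that \<open>C = - N\<^sub>2\<^sub>2\<^sup>-\<^sup>1 N\<^sub>2\<^sub>1\<close>, so that \<open>quadIZ N C\<close> is the Schur complement
  of the lower right block \<open>N\<^sub>2\<^sub>2\<close>.\<close>
definition schur_stack :: "real^('k::finite + 'n::finite)^('k + 'n) \<Rightarrow> real^'k^'n \<Rightarrow> bool" where
  "schur_stack N C \<longleftrightarrow> (\<forall>u e. (stackIZ C *v u) \<bullet> (N *v block_vec 0 e) = 0)"

lemma schur_stack_exists:
  fixes N :: "real^('k::finite + 'n::finite)^('k + 'n)"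
  assumes sN: "transpose N = N"
    and neg: "\<And>d::real^'n. d \<noteq> 0 \<Longrightarrow> quad_form N (block_vec (0::real^'k) d) < 0"
  obtains C :: "real^'k^'n" where "schur_stack N C"
proof -
  define L where "L d = lower_block (N *v block_vec (0::real^'k) d)" for d :: "real^'n"
  have "linear L"
    using linear_compose[OF linear_compose[OF linear_block_vec_right matrix_vector_mul_linear[of N]]
        linear_lower_block]
    by (simp add: L_def[abs_def] comp_def)
  have "inj L"
    unfolding linear_inj_iff_eq_0[OF \<open>linear L\<close>]
  proof (intro allI impI)
    fix d
    assume "L d = 0"
    then have "quad_form N (block_vec (0::real^'k) d) = 0"
      by (simp add: quad_form_def inner_block_vec_zero_left L_def)
    then show "d = 0" using neg[of d] by fastforce
  qed
  then have "surj L" by (rule eucl.linear_injective_imp_surjective[OF \<open>linear L\<close>]) simp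
  then obtain g where "linear g" and Lg: "\<And>y. L (g y) = y"
    using linear_surjective_right_inverse[OF \<open>linear L\<close>] by (metis comp_apply id_apply)
  define c where "c u = g (- lower_block (N *v block_vec u (0::real^'n)))" for u :: "real^'k"
  have "linear c"
    using linear_compose[OF linear_compose[OF linear_compose[OF linear_block_vec_left
          matrix_vector_mul_linear[of N]] linear_lower_block] linear_compose[OF linear_uminus \<open>linear g\<close>]]
    by (simp add: c_def[abs_def] comp_def)
  define C where "C = matrix c"
  have C: "C *v u = c u" for u using fun_cong[OF matrix_vector_mul(2)[OF \<open>linear c\<close>]] by (simp add: C_def)
  have "(stackIZ C *v u) \<bullet> (N *v block_vec 0 e) = 0" for u e
  proof -
    have "(stackIZ C *v u) \<bullet> (N *v block_vec 0 e) = block_vec 0 e \<bullet> (N *v block_vec u (c u))"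
      by (simp add: symmetric_inner_mult_vec[OF sN] stackIZ_mult_vec C)
    also have "\<dots> = e \<bullet> lower_block (N *v (block_vec u 0 + block_vec 0 (c u)))"
      by (simp add: inner_block_vec_zero_left block_vec_add)
    also have "\<dots> = e \<bullet> (lower_block (N *v block_vec u 0) + L (c u))"
      by (simp add: L_def matrix_vector_right_distrib linear_add[OF linear_lower_block])
    also have "\<dots> = 0" by (simp add: c_def Lg)
    finally show ?thesis .
  qed
  then show ?thesis by (intro that[of C]) (simp add: schur_stack_def)
qed

lemma quad_form_schur_split:
  assumes "transpose N = N" and "schur_stack N C"
  shows "quad_form N (stackIZ C *v u + block_vec 0 e)
    = quad_form N (stackIZ C *v u) + quad_form N (block_vec 0 e)"
  using assms by (simp add: quad_form_add schur_stack_def)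

lemma quad_form_quadIZ_schur_split:
  assumes "transpose N = N" and "schur_stack N C"
  shows "quad_form (quadIZ N Z) u = quad_form (quadIZ N C) u + quad_form N (block_vec 0 ((Z - C) *v u))"
  using quad_form_schur_split[OF assms] stackIZ_add_mult_vec[of C "Z - C" u]
  by (simp add: quad_form_quadIZ)

lemma schur_stack_mem_SN:
  fixes N :: "real^('k::finite + 'n::finite)^('k + 'n)" and C Zb :: "real^'k^'n"
  assumes sN: "transpose N = N"
    and neg: "\<And>d::real^'n. d \<noteq> 0 \<Longrightarrow> quad_form N (block_vec (0::real^'k) d) < 0"
    and schur: "schur_stack N C" and Zb: "Zb \<in> SN N"
  shows "C \<in> SN N"
  unfolding mem_SN_iff[OF sN]
proof
  fix u
  have "quad_form N (block_vec 0 ((Zb - C) *v u)) \<le> 0"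
    using neg[of "(Zb - C) *v u"] by (cases "(Zb - C) *v u = 0") auto
  moreover have "0 \<le> quad_form (quadIZ N Zb) u" using Zb by (simp add: mem_SN_iff[OF sN] quad_form_quadIZ)
  ultimately show "0 \<le> quad_form N (stackIZ C *v u)"
    using quad_form_quadIZ_schur_split[OF sN schur, of Zb u] by (simp add: quad_form_quadIZ)
qed

text \<open>The update is the rank-one matrix \<open>\<zeta> \<mapsto> (u\<^sup>T P \<zeta> / u\<^sup>T P u) v\<close> with \<open>P = quadIZ N C\<close>; it keeps
  \<open>SN N\<close> by the Cauchy--Schwarz inequality for \<open>P\<close>.\<close>
lemma schur_stack_rank_one_update:
  fixes N :: "real^('k::finite + 'n::finite)^('k + 'n)" and C :: "real^'k^'n"
  defines "P \<equiv> quadIZ N C"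
  assumes sN: "transpose N = N" and schur: "schur_stack N C" and C: "C \<in> SN N"
    and u: "0 < quad_form P u" and v: "0 \<le> quad_form P u + quad_form N (block_vec (0::real^'k) v)"
  obtains Z where "Z \<in> SN N" and "Z *v u = C *v u + v"
proof
  define Z where "Z = C + outer_prod v ((1 / quad_form P u) *\<^sub>R (u v* P))"
  have update: "(Z - C) *v \<zeta> = ((u \<bullet> (P *v \<zeta>)) / quad_form P u) *\<^sub>R v" for \<zeta>
    by (simp add: Z_def outer_prod_mult_vec dot_lmul_matrix)
  then show "Z *v u = C *v u + v"
    using u by (simp add: matrix_vector_mult_diff_rdistrib quad_form_def algebra_simps)
  have psd: "psd P" using C by (simp add: SN_def P_def)
  show "Z \<in> SN N"
    unfolding mem_SN_iff[OF sN]
  proof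
    fix \<zeta>
    define r where "r = (u \<bullet> (P *v \<zeta>)) / quad_form P u"
    have "0 \<le> quad_form P \<zeta> - (u \<bullet> (P *v \<zeta>))\<^sup>2 / quad_form P u"
      using psd_cauchy_schwarz[OF psd u, of \<zeta>] u by (simp add: pos_divide_le_eq mult.commute)
    also have "\<dots> = quad_form P \<zeta> - r\<^sup>2 * quad_form P u"
      using u by (simp add: r_def power2_eq_square)
    also have "\<dots> \<le> quad_form P \<zeta> + r\<^sup>2 * quad_form N (block_vec 0 v)"
      using mult_left_mono[of "- quad_form P u" "quad_form N (block_vec 0 v)" "r\<^sup>2"] v by simp
    also have "\<dots> = quad_form (quadIZ N Z) \<zeta>"
      using quad_form_quadIZ_schur_split[OF sN schur, of Z \<zeta>, folded P_def]
      by (simp add: update r_def block_vec_zero_scaleR)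
    finally show "0 \<le> quad_form N (stackIZ Z *v \<zeta>)" by (simp add: quad_form_quadIZ)
  qed
qed

lemma SN_interpolates:
  fixes N :: "real^('k::finite + 'n::finite)^('k + 'n)" and C :: "real^'k^'n"
  assumes sN: "transpose N = N"
    and neg: "\<And>d::real^'n. d \<noteq> 0 \<Longrightarrow> quad_form N (block_vec (0::real^'k) d) < 0"
    and schur: "schur_stack N C" and C: "C \<in> SN N"
    and nonneg: "0 \<le> quad_form N (block_vec u w)"
  obtains Z :: "real^'k^'n" where "Z \<in> SN N" and "Z *v u = w"
proof -
  define v where "v = w - C *v u"
  have "block_vec u w = stackIZ C *v u + block_vec 0 v"
    by (simp add: stackIZ_mult_vec block_vec_add v_def)
  then have split: "quad_form N (block_vec u w) = quad_form (quadIZ N C) u + quad_form N (block_vec 0 v)"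
    by (simp add: quad_form_schur_split[OF sN schur] quad_form_quadIZ)
  have "0 \<le> quad_form (quadIZ N C) u" using C by (simp add: mem_SN_iff[OF sN] quad_form_quadIZ)
  then consider "quad_form (quadIZ N C) u = 0" | "0 < quad_form (quadIZ N C) u" by linarith
  then show ?thesis
  proof cases
    case 1
    then have "v = 0" using nonneg split neg[of v] by fastforce
    with C show ?thesis by (intro that[of C]) (simp_all add: v_def)
  next
    case 2
    from schur_stack_rank_one_update[OF sN schur C 2, of v] nonneg split
    obtain Z where "Z \<in> SN N" and "Z *v u = C *v u + v" by metis
    with that show ?thesis by (simp add: v_def)
  qed
qed

lemma quad_form_pos_of_pd_quadIZ_on_SN:
  fixes M N :: "real^('k::finite + 'n::finite)^('k + 'n)" and Zb :: "real^'k^'n"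
  assumes sN: "transpose N = N" and bounded: "bounded (SN N :: (real^'k^'n) set)"
    and Zb: "Zb \<in> SN N" and pd_on_SN: "\<forall>Z \<in> (SN N :: (real^'k^'n) set). pd (quadIZ M Z)"
    and "x \<noteq> 0" and nonneg: "0 \<le> quad_form N x"
  shows "0 < quad_form M x"
proof -
  have neg: "quad_form N (block_vec (0::real^'k) d) < 0" if "d \<noteq> 0" for d :: "real^'n"
    using lower_block_quad_form_neg[OF sN bounded Zb that] .
  obtain C where schur: "schur_stack N C" using schur_stack_exists[OF sN neg] by blast
  have C: "C \<in> SN N" by (rule schur_stack_mem_SN[OF sN neg schur Zb])
  obtain u w where x: "x = block_vec u w" by (rule block_vec_cases)
  have "u \<noteq> 0"
  proof
    assume "u = 0"
    then have "quad_form N x < 0" using neg[of w] \<open>x \<noteq> 0\<close> by (simp add: x)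
    with nonneg show False by simp
  qed
  obtain Z where "Z \<in> SN N" and Zu: "Z *v u = w"
    using SN_interpolates[OF sN neg schur C] nonneg x by blast
  then have "0 < quad_form (quadIZ M Z) u" using pd_on_SN \<open>u \<noteq> 0\<close> by (simp add: pd_iff_quad_form)
  then show ?thesis by (simp add: quad_form_quadIZ stackIZ_mult_vec Zu x)
qed

lemma pd_quadIZ_of_pd_diff:
  fixes M N :: "real^('k::finite + 'n::finite)^('k + 'n)" and Z :: "real^'k^'n"
  assumes sM: "transpose M = M" and sN: "transpose N = N"
    and "0 \<le> \<alpha>" and pd: "pd (M - \<alpha> *\<^sub>R N)" and Z: "Z \<in> SN N"
  shows "pd (quadIZ M Z)"
  unfolding pd_iff_quad_form
proof (intro conjI allI impI)
  show "transpose (quadIZ M Z) = quadIZ M Z" by (rule transpose_quadIZ[OF sM])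
  fix u :: "real^'k"
  assume "u \<noteq> 0"
  then have "0 < quad_form M (stackIZ Z *v u) - \<alpha> * quad_form N (stackIZ Z *v u)"
    using pd by (simp add: pd_iff_quad_form quad_form_diff_scaleR stackIZ_mult_vec)
  moreover have "0 \<le> \<alpha> * quad_form N (stackIZ Z *v u)"
    using Z \<open>0 \<le> \<alpha>\<close> by (simp add: mem_SN_iff[OF sN])
  ultimately show "0 < quad_form (quadIZ M Z) u" by (simp add: quad_form_quadIZ)
qed

theorem theorem5:
  fixes M N :: "real^('k::finite + 'n::finite)^('k + 'n)"
  assumes "transpose M = M" and "transpose N = N"
    and "bounded (SN N :: (real^'k^'n) set)"
    and "\<exists>Zb :: real^'k^'n. pd (quadIZ N Zb)"
  shows "(\<forall>Z \<in> (SN N :: (real^'k^'n) set). pd (quadIZ M Z))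
         \<longleftrightarrow> (\<exists>\<alpha>::real. \<alpha> \<ge> 0 \<and> pd (M - \<alpha> *\<^sub>R N))"
proof
  assume pd_on_SN: "\<forall>Z \<in> (SN N :: (real^'k^'n) set). pd (quadIZ M Z)"
  obtain Zb :: "real^'k^'n" where Zb: "pd (quadIZ N Zb)" using assms(4) by blast
  then have "Zb \<in> SN N" by (simp add: SN_def pd_imp_psd)
  have "(axis undefined 1 :: real^'k) \<noteq> 0" by simp
  then have x0: "0 < quad_form N (stackIZ Zb *v axis undefined 1)"
    using Zb by (simp add: pd_iff_quad_form quad_form_quadIZ)
  have "\<And>x. x \<noteq> 0 \<Longrightarrow> 0 \<le> quad_form N x \<Longrightarrow> 0 < quad_form M x"
    by (rule quad_form_pos_of_pd_quadIZ_on_SN[OF assms(2,3) \<open>Zb \<in> SN N\<close> pd_on_SN])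
  then obtain \<alpha> where "0 \<le> \<alpha>" and "pd (M - \<alpha> *\<^sub>R N)" by (rule s_lemma_strict[OF assms(1,2) x0])
  then show "\<exists>\<alpha>\<ge>0. pd (M - \<alpha> *\<^sub>R N)" by blast
next
  assume "\<exists>\<alpha>\<ge>0. pd (M - \<alpha> *\<^sub>R N)"
  then show "\<forall>Z \<in> (SN N :: (real^'k^'n) set). pd (quadIZ M Z)"
    using pd_quadIZ_of_pd_diff[OF assms(1,2)] by blast
qed

end
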